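(* There is $q_0$ such that the following holds for every prime power $q\ge q_0$. Let $n=q^2$, and let $k,s$ be positive integers with $(ks)^{3/2}<\frac{n^{1/4}}{32\ln n}$. Then there exists a binary (i.e. over $\mathbb{F}_2$) $\bigl(n,N,k,2\lceil \sqrt n/s\rceil\bigr)$-BAC with $$N\le n+64(ks)^{3/2}n^{3/4}\ln n.$$
   Context: $[n]=\{1,\dots,n\}$. An $(n,N,k,m)$-batch array code (BAC) over $\mathbb{F}_2$ is an $\mathbb{F}_2$-linear map $\mathcal{C}:\mathbf x=(x_1,\dots,x_n)\in\mathbb{F}_2^n\mapsto(\mathbf c_1,\dots,\mathbf c_m)$ with buckets $\mathbf c_\ell\in\mathbb{F}_2^{N_\ell}$, $N_\ell\ge1$ independent of $\mathbf x$, $\sum_\ell N_\ell=N$, such that for every multiset $\{\{i_1,\dots,i_k\}\}$ of elements of $[n]$ there is a partition of $[m]$ into $k$ sets $R_1,\dots,R_k$ such that for each $j\in[k]$, $x_{i_j}$ is an $\mathbb{F}_2$-linear combination of values $f_\ell(\mathbf c_\ell)$, $\ell\in R_j$, for some linear functionals $f_\ell:\mathbb{F}_2^{N_\ell}\to\mathbb{F}_2$ (independent of $\mathbf x$). *)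

theory Defs
  imports "HOL-Analysis.Analysis" "HOL-Library.Z2" "HOL-Number_Theory.Prime_Powers"
begin

text \<open>Vectors in F_2^n are functions nat => bit, only coordinates 0..<n matter.
  An F_2-linear map x |-> (c_0,...,c_{m-1}) with bucket c_l in F_2^{Nb l} is given by its
  matrix G: coordinate t of bucket l is  sum_{i<n} G l t i * x i.\<close>

definition bucket_val :: "nat \<Rightarrow> (nat \<Rightarrow> nat \<Rightarrow> nat \<Rightarrow> bit) \<Rightarrow> nat \<Rightarrow> (nat \<Rightarrow> bit) \<Rightarrow> nat \<Rightarrow> bit" where
  "bucket_val n G l x t = (\<Sum>i<n. G l t i * x i)"

definition functional_val :: "(nat \<Rightarrow> nat) \<Rightarrow> (nat \<Rightarrow> nat \<Rightarrow> bit) \<Rightarrow> nat \<Rightarrow> (nat \<Rightarrow> bit) \<Rightarrow> bit" where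
  "functional_val Nb a l c = (\<Sum>t<Nb l. a l t * c t)"

text \<open>(n,N,k,m)-batch array code over F_2 with data indices [n] = {..<n} and buckets {..<m}.
  A multiset {{i_1,...,i_k}} of elements of [n] is given by a map j |-> i j on {..<k};
  R j (j<k) is a partition of {..<m} into k sets.\<close>

definition is_BAC :: "nat \<Rightarrow> nat \<Rightarrow> nat \<Rightarrow> nat \<Rightarrow> bool" where
  "is_BAC n N k m \<longleftrightarrow>
    (\<exists>(Nb :: nat \<Rightarrow> nat) (G :: nat \<Rightarrow> nat \<Rightarrow> nat \<Rightarrow> bit).
       (\<forall>l<m. Nb l \<ge> 1) \<and> (\<Sum>l<m. Nb l) = N \<and>
       (\<forall>idx :: nat \<Rightarrow> nat. (\<forall>j<k. idx j < n) \<longrightarrow>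
          (\<exists>R :: nat \<Rightarrow> nat set.
             (\<Union>j<k. R j) = {..<m} \<and>
             (\<forall>j1<k. \<forall>j2<k. j1 \<noteq> j2 \<longrightarrow> R j1 \<inter> R j2 = {}) \<and>
             (\<forall>j<k. \<exists>(a :: nat \<Rightarrow> nat \<Rightarrow> bit) (lam :: nat \<Rightarrow> bit).
                \<forall>x :: nat \<Rightarrow> bit.
                  x (idx j) = (\<Sum>l\<in>R j. lam l * functional_val Nb a l (bucket_val n G l x))))))"

end

theory Submission
  imports Defs "HOL-Number_Theory.Cong"
begin

text \<open>Arrange the n = q^2 data bits as an array with T = L M \<le> t \<approx> q / s columns and
  store every column in its own bucket. Viewing the columns as an L \<times> M grid, a shift vector
  u : [L] \<rightarrow> [M] splits them into M blocks meeting every grid row once; D = 3 k r further buckets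
  store, for D shift vectors, the parities of all blocks in every array row. A request for a column
  that was already requested is answered by a parity bucket together with the other columns of
  its block. A union bound over all shift families yields one in which, for every shift f, grid
  cell b and block j of f, fewer than r \<approx> 2 ln q other shifts g have a g-block through b that
  meets block j outside b; then greedily chosen repair blocks can be kept disjoint from each other and from all
  requested columns because D \<ge> k (2 r + 1). With L \<approx> sqrt (q / (64 k s)) the parity buckets
  hold about D n / L = O((k s)^(3/2) q^(3/2) ln q) bits.\<close>

lemma functional_val_coordinate:
  assumes "sel l < Nb l"
  shows "functional_val Nb (\<lambda>l t. if t = sel l then 1 else 0) l v = v (sel l)"
proof -
  have "functional_val Nb (\<lambda>l t. if t = sel l then 1 else 0) l v = (\<Sum>t<Nb l. if t = sel l then v t else 0)"
    unfolding functional_val_def by (rule sum.cong) simp_all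
  then show ?thesis using assms by simp
qed

lemma bucket_val_indicator:
  assumes "\<And>e. G l c e = of_bool (e \<in> E)"
  shows "bucket_val n G l x c = (\<Sum>e\<in>E \<inter> {..<n}. x e)"
proof -
  have "bucket_val n G l x c = (\<Sum>e<n. if e \<in> E then x e else 0)"
    unfolding bucket_val_def by (rule sum.cong) (simp_all add: assms)
  also have "\<dots> = (\<Sum>e\<in>E \<inter> {..<n}. x e)"
    using sum.inter_restrict[of "{..<n}" x E] by (simp add: Int_commute)
  finally show ?thesis .
qed

lemma extend_disjoint_family_to_partition:
  assumes "0 < k" "\<forall>j<k. C j \<subseteq> A" "\<forall>j1<k. \<forall>j2<k. j1 \<noteq> j2 \<longrightarrow> C j1 \<inter> C j2 = {}"
  shows "\<exists>R. (\<Union>j<k. R j) = A \<and> (\<forall>j1<k. \<forall>j2<k. j1 \<noteq> j2 \<longrightarrow> R j1 \<inter> R j2 = {}) \<and>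
    (\<forall>j<k. C j \<subseteq> R j \<and> R j \<subseteq> A)"
proof -
  define R where "R j = C j \<union> (if j = 0 then A - (\<Union>i<k. C i) else {})" for j
  have "A \<subseteq> (\<Union>j<k. R j)"
  proof
    fix l assume "l \<in> A"
    show "l \<in> (\<Union>j<k. R j)"
    proof (cases "\<exists>i<k. l \<in> C i")
      case True
      then show ?thesis unfolding R_def by blast
    next
      case False
      then have "l \<in> R 0" using \<open>l \<in> A\<close> unfolding R_def by simp
      then show ?thesis using \<open>0 < k\<close> by blast
    qed
  qed
  moreover have "\<forall>j<k. C j \<subseteq> R j \<and> R j \<subseteq> A"
    using assms(2) unfolding R_def by auto
  moreover have "\<forall>j1<k. \<forall>j2<k. j1 \<noteq> j2 \<longrightarrow> R j1 \<inter> R j2 = {}"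
    using assms(3) unfolding R_def by auto
  ultimately show ?thesis
    by (intro exI[of _ R]) blast
qed

text \<open>Unused buckets are attached to the first request with coefficient 0.\<close>
lemma is_BAC_of_recovery_sets:
  fixes Nb :: "nat \<Rightarrow> nat" and G :: "nat \<Rightarrow> nat \<Rightarrow> nat \<Rightarrow> bit"
  assumes sizes: "\<forall>l<m. 1 \<le> Nb l" "(\<Sum>l<m. Nb l) = N" and "0 < k"
    and recovery: "\<And>idx. \<forall>j<k. idx j < n \<Longrightarrow> \<exists>C. (\<forall>j<k. C j \<subseteq> {..<m}) \<and>
        (\<forall>j1<k. \<forall>j2<k. j1 \<noteq> j2 \<longrightarrow> C j1 \<inter> C j2 = {}) \<and>
        (\<forall>j<k. \<exists>sel. (\<forall>l\<in>C j. sel l < Nb l) \<and>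
           (\<forall>x. x (idx j) = (\<Sum>l\<in>C j. bucket_val n G l x (sel l))))"
  shows "is_BAC n N k m"
proof -
  have "\<exists>R. (\<Union>j<k. R j) = {..<m} \<and> (\<forall>j1<k. \<forall>j2<k. j1 \<noteq> j2 \<longrightarrow> R j1 \<inter> R j2 = {}) \<and>
      (\<forall>j<k. \<exists>a lam. \<forall>x. x (idx j) = (\<Sum>l\<in>R j. lam l * functional_val Nb a l (bucket_val n G l x)))"
    if "\<forall>j<k. idx j < n" for idx
  proof -
    from recovery[OF that] obtain C where C_sub: "\<forall>j<k. C j \<subseteq> {..<m}"
      and C_disj: "\<forall>j1<k. \<forall>j2<k. j1 \<noteq> j2 \<longrightarrow> C j1 \<inter> C j2 = {}"
      and C_rec: "\<forall>j<k. \<exists>sel. (\<forall>l\<in>C j. sel l < Nb l) \<and>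
           (\<forall>x. x (idx j) = (\<Sum>l\<in>C j. bucket_val n G l x (sel l)))"
      by blast
    obtain R where R: "(\<Union>j<k. R j) = {..<m}" "\<forall>j1<k. \<forall>j2<k. j1 \<noteq> j2 \<longrightarrow> R j1 \<inter> R j2 = {}"
        "\<forall>j<k. C j \<subseteq> R j \<and> R j \<subseteq> {..<m}"
      using extend_disjoint_family_to_partition[OF \<open>0 < k\<close> C_sub C_disj] by blast
    moreover have "\<exists>a lam. \<forall>x. x (idx j) = (\<Sum>l\<in>R j. lam l * functional_val Nb a l (bucket_val n G l x))"
      if "j < k" for j
    proof -
      obtain sel where sel: "\<forall>l\<in>C j. sel l < Nb l"
        and rec: "\<forall>x. x (idx j) = (\<Sum>l\<in>C j. bucket_val n G l x (sel l))"
        using C_rec \<open>j < k\<close> by blast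
      have sub: "C j \<subseteq> R j" and "R j \<subseteq> {..<m}"
        using R(3) \<open>j < k\<close> by auto
      then have fin: "finite (R j)"
        using finite_subset by blast
      let ?read = "\<lambda>x l. functional_val Nb (\<lambda>l t. if t = sel l then 1 else 0) l (bucket_val n G l x)"
      have "x (idx j) = (\<Sum>l\<in>R j. (if l \<in> C j then 1 else 0) * ?read x l)" for x
      proof -
        have "(\<Sum>l\<in>R j. (if l \<in> C j then 1 else 0) * ?read x l) = (\<Sum>l\<in>R j. if l \<in> C j then ?read x l else 0)"
          by (rule sum.cong) simp_all
        also have "\<dots> = (\<Sum>l\<in>C j. ?read x l)"
          by (simp add: sum.inter_restrict[OF fin, symmetric] Int_absorb1[OF sub])
        also have "\<dots> = x (idx j)"
          using rec sel by (simp add: functional_val_coordinate)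
        finally show ?thesis by simp
      qed
      then show ?thesis by (intro exI allI)
    qed
    ultimately show ?thesis by blast
  qed
  then show ?thesis using sizes unfolding is_BAC_def by blast
qed

lemma card_UN_le_card_mult:
  assumes "finite I" "\<And>i. i \<in> I \<Longrightarrow> card (A i) \<le> c"
  shows "card (\<Union>i\<in>I. A i) \<le> card I * c"
proof -
  have "card (\<Union>i\<in>I. A i) \<le> (\<Sum>i\<in>I. card (A i))"
    using assms(1) by (rule card_UN_le)
  also have "\<dots> \<le> (\<Sum>i\<in>I. c)"
    using assms(2) by (rule sum_mono)
  finally show ?thesis by simp
qed

lemma mod_add_left_cancel_less:
  fixes a b c M :: nat
  assumes "a < M" "b < M" "(c + a) mod M = (c + b) mod M"
  shows "a = b"
  using assms cong_add_lcancel_nat[of c a b M] by (simp add: cong_def)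

lemma card_PiE_determined_coordinate_le:
  assumes "finite I" "i \<in> I" "i0 \<in> I" "i \<noteq> i0" "\<And>x. finite (F x)"
    and unique: "\<And>x w w'. w \<in> C x \<Longrightarrow> w' \<in> C x \<Longrightarrow> w = w'"
  shows "card {v \<in> PiE I F. v i \<in> C (v i0)} \<le> card (PiE (I - {i}) F)"
proof (rule card_inj_on_le)
  show "inj_on (\<lambda>v. restrict v (I - {i})) {v \<in> PiE I F. v i \<in> C (v i0)}"
  proof (rule inj_onI)
    fix v v' assume v: "v \<in> {v \<in> PiE I F. v i \<in> C (v i0)}" and v': "v' \<in> {v \<in> PiE I F. v i \<in> C (v i0)}"
      and eq: "restrict v (I - {i}) = restrict v' (I - {i})"
    have "v x = v' x" if "x \<in> I - {i}" for x
      using fun_cong[OF eq, of x] that by simp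
    moreover from this have "v i = v' i"
      using v v' unique assms(3,4) by auto
    ultimately show "v = v'"
      using v v' by (intro ext) (metis (mono_tags) Diff_iff PiE_arb empty_iff insert_iff mem_Collect_eq)
  qed
  show "(\<lambda>v. restrict v (I - {i})) ` {v \<in> PiE I F. v i \<in> C (v i0)} \<subseteq> PiE (I - {i}) F"
    by (auto simp: PiE_def Pi_def)
  show "finite (PiE (I - {i}) F)"
    using assms by (simp add: finite_PiE)
qed

lemma card_PiE_constrained_le:
  fixes A :: "'b \<Rightarrow> 'b set"
  assumes "finite I" "f \<in> I" "G \<subseteq> I - {f}" "finite W" "\<And>u. A u \<subseteq> W" "\<And>u. card (A u) \<le> c"
  shows "card {a \<in> PiE I (\<lambda>_. W). \<forall>g\<in>G. a g \<in> A (a f)}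
    \<le> card W * c ^ card G * card W ^ (card I - card G - 1)"
proof -
  define F where "F u g = (if g = f then {u} else if g \<in> G then A u else W)" for u g
  define h where "h g = (if g = f then 1 else if g \<in> G then c else card W)" for g
  have finA: "finite (A u)" for u
    using assms(4,5) finite_subset by blast
  have finG: "finite G" and fin_rest: "finite (I - insert f G)"
    using assms(1,3) finite_subset by auto
  have split: "I = insert f (G \<union> (I - insert f G))"
    using assms(2,3) by auto
  have "(\<Prod>g\<in>I. h g) = h f * ((\<Prod>g\<in>G. h g) * (\<Prod>g\<in>I - insert f G. h g))"
    using assms(3) finG fin_rest by (subst split, subst prod.insert) (auto intro: prod.union_disjoint)
  also have "\<dots> = c ^ card G * card W ^ (card I - card G - 1)"
  proof -
    have "card (I - insert f G) = card I - card G - 1"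
      using assms(1,2,3) finG by (subst card_Diff_subset) (auto simp: card_insert_if)
    moreover have "(\<Prod>g\<in>G. h g) = (\<Prod>g\<in>G. c)"
      using assms(3) by (intro prod.cong) (auto simp: h_def)
    ultimately show ?thesis
      by (simp add: h_def)
  qed
  finally have prod_h: "(\<Prod>g\<in>I. h g) = c ^ card G * card W ^ (card I - card G - 1)" .
  have "{a \<in> PiE I (\<lambda>_. W). \<forall>g\<in>G. a g \<in> A (a f)} \<subseteq> (\<Union>u\<in>W. PiE I (F u))"
    using assms(2,3) unfolding F_def by (force simp: PiE_def Pi_def)
  then have "card {a \<in> PiE I (\<lambda>_. W). \<forall>g\<in>G. a g \<in> A (a f)} \<le> card (\<Union>u\<in>W. PiE I (F u))"
    by (rule card_mono[rotated]) (use assms(1,4) finA in \<open>auto intro!: finite_PiE simp: F_def\<close>)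
  also have "\<dots> \<le> (\<Sum>u\<in>W. card (PiE I (F u)))"
    using assms(4) by (rule card_UN_le)
  also have "\<dots> \<le> (\<Sum>u\<in>W. \<Prod>g\<in>I. h g)"
    using assms(1,6) by (intro sum_mono) (auto simp: card_PiE F_def h_def intro!: prod_mono)
  finally show ?thesis
    using prod_h by (simp add: mult.assoc)
qed

text \<open>A point b < L * M is the cell (b div M, b mod M) of an L \<times> M grid. A shift vector
  u : [L] \<rightarrow> [M] rotates row i by u i, and the cells with equal rotated column form M blocks,
  each meeting every row exactly once.\<close>

definition block_index :: "nat \<Rightarrow> (nat \<Rightarrow> nat) \<Rightarrow> nat \<Rightarrow> nat" where
  "block_index M u b = (b mod M + u (b div M)) mod M"

definition block :: "nat \<Rightarrow> nat \<Rightarrow> (nat \<Rightarrow> nat) \<Rightarrow> nat \<Rightarrow> nat set" where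
  "block T M u j = {b. b < T \<and> block_index M u b = j}"

definition block_of :: "nat \<Rightarrow> nat \<Rightarrow> (nat \<Rightarrow> nat) \<Rightarrow> nat \<Rightarrow> nat set" where
  "block_of T M u b = block T M u (block_index M u b)"

definition collide :: "nat \<Rightarrow> nat \<Rightarrow> (nat \<Rightarrow> nat) \<Rightarrow> (nat \<Rightarrow> nat) \<Rightarrow> nat \<Rightarrow> nat \<Rightarrow> bool" where
  "collide L M u v b j \<longleftrightarrow> (block_of (L * M) M v b - {b}) \<inter> block (L * M) M u j \<noteq> {}"

lemma block_subset: "block T M u j \<subseteq> {..<T}"
  by (auto simp: block_def)

lemma block_of_self: "b < T \<Longrightarrow> b \<in> block_of T M u b"
  by (simp add: block_of_def block_def)

lemma collide_imp_row_constraint: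
  assumes "b < L * M" "v \<in> PiE {..<L} (\<lambda>_. {..<M})" "collide L M u v b j"
  shows "\<exists>i<L. i \<noteq> b div M \<and> (\<exists>y<M. (y + u i) mod M = j \<and>
    (y + v i) mod M = (b mod M + v (b div M)) mod M)"
proof -
  obtain w where w: "w < L * M" "block_index M v w = block_index M v b" "w \<noteq> b" "block_index M u w = j"
    using assms(3) unfolding collide_def block_of_def block_def by auto
  have "0 < M"
    using assms(1) by (cases M) auto
  have "w div M \<noteq> b div M"
  proof
    assume "w div M = b div M"
    then have "(v (b div M) + w mod M) mod M = (v (b div M) + b mod M) mod M"
      using w(2) by (simp add: block_index_def add.commute)
    then have "w mod M = b mod M"
      using \<open>0 < M\<close> mod_add_left_cancel_less[of "w mod M" M "b mod M" "v (b div M)"] by simp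
    then show False
      using \<open>w div M = b div M\<close> w(3) by (metis div_mult_mod_eq)
  qed
  moreover have "w div M < L" "w mod M < M"
    using w(1) \<open>0 < M\<close> by (simp_all add: less_mult_imp_div_less)
  moreover have "(w mod M + u (w div M)) mod M = j"
      "(w mod M + v (w div M)) mod M = (b mod M + v (b div M)) mod M"
    using w(2,4) by (simp_all add: block_index_def)
  ultimately show ?thesis by blast
qed

lemma card_colliding_shifts_le:
  assumes "b < L * M"
  shows "card {v \<in> PiE {..<L} (\<lambda>_. {..<M}). collide L M u v b j} \<le> (L - 1) * M ^ (L - 1)"
proof -
  let ?W = "PiE {..<L} (\<lambda>_. {..<M})"
  define i0 y0 where "i0 = b div M" and "y0 = b mod M"
  define C where "C i w0 = {w. w < M \<and> (\<exists>y<M. (y + u i) mod M = j \<and> (y + w) mod M = (y0 + w0) mod M)}"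
    for i w0
  have i0: "i0 < L"
    using assms by (simp add: i0_def less_mult_imp_div_less)
  have "{v \<in> ?W. collide L M u v b j} \<subseteq> (\<Union>i\<in>{..<L} - {i0}. {v \<in> ?W. v i \<in> C i (v i0)})"
    using collide_imp_row_constraint[OF assms] by (fastforce simp: C_def i0_def y0_def)
  then have "card {v \<in> ?W. collide L M u v b j} \<le> card (\<Union>i\<in>{..<L} - {i0}. {v \<in> ?W. v i \<in> C i (v i0)})"
    by (intro card_mono) (auto intro!: finite_PiE)
  also have "\<dots> \<le> card ({..<L} - {i0}) * M ^ (L - 1)"
  proof (intro card_UN_le_card_mult)
    fix i assume i: "i \<in> {..<L} - {i0}"
    have unique: "w = w'" if ww': "w \<in> C i x" "w' \<in> C i x" for x w w'
    proof -
      obtain y y' where y: "y < M" "(y + u i) mod M = j" "(y + w) mod M = (y0 + x) mod M"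
          and y': "y' < M" "(y' + u i) mod M = j" "(y' + w') mod M = (y0 + x) mod M"
          and "w < M" "w' < M"
        using ww' unfolding C_def by blast
      then have "y = y'"
        using mod_add_left_cancel_less[of y M y' "u i"] by (simp add: add.commute)
      then show ?thesis
        using y y' \<open>w < M\<close> \<open>w' < M\<close> mod_add_left_cancel_less[of w M w' y] by simp
    qed
    have "card {v \<in> ?W. v i \<in> C i (v i0)} \<le> card (PiE ({..<L} - {i}) (\<lambda>_. {..<M}))"
      using i i0 unique by (intro card_PiE_determined_coordinate_le) auto
    also have "\<dots> = M ^ (L - 1)"
      using i by (simp add: card_PiE)
    finally show "card {v \<in> ?W. v i \<in> C i (v i0)} \<le> M ^ (L - 1)" .
  qed simp
  also have "card ({..<L} - {i0}) = L - 1"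
    using i0 by simp
  finally show ?thesis .
qed

lemma few_conflicts_if_few_collisions:
  assumes "\<forall>f<D. \<forall>b<L * M. \<forall>j<M. card {g. g < D \<and> g \<noteq> f \<and> collide L M (a f) (a g) b j} < r"
    and "0 < M" "f < D" "b < L * M" "b' < L * M"
  shows "card {g. g < D \<and> g \<noteq> f \<and> (block_of (L * M) M (a g) b - {b}) \<inter> block_of (L * M) M (a f) b' \<noteq> {}} < r"
  using assms by (auto simp: collide_def block_of_def block_index_def)

lemma card_colliding_families_le:
  assumes "f < D" "G \<subseteq> {..<D} - {f}" "card G = r" "b < L * M"
  shows "card {a \<in> PiE {..<D} (\<lambda>_. PiE {..<L} (\<lambda>_. {..<M})). \<forall>g\<in>G. collide L M (a f) (a g) b j} * M ^ r
    \<le> (L - 1) ^ r * (M ^ L) ^ D"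
proof -
  let ?W = "PiE {..<L} (\<lambda>_. {..<M})"
  have L0: "0 < L" and rD: "r + 1 \<le> D"
    using assms card_mono[OF _ assms(2)] by (auto intro: Nat.gr0I)
  have "{a \<in> PiE {..<D} (\<lambda>_. ?W). \<forall>g\<in>G. collide L M (a f) (a g) b j}
      = {a \<in> PiE {..<D} (\<lambda>_. ?W). \<forall>g\<in>G. a g \<in> {v \<in> ?W. collide L M (a f) v b j}}"
    using assms(2) by auto
  also have "card \<dots> \<le> card ?W * ((L - 1) * M ^ (L - 1)) ^ card G * card ?W ^ (card {..<D} - card G - 1)"
    using assms by (intro card_PiE_constrained_le card_colliding_shifts_le) (auto intro!: finite_PiE)
  finally have "card {a \<in> PiE {..<D} (\<lambda>_. ?W). \<forall>g\<in>G. collide L M (a f) (a g) b j} * M ^ r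
      \<le> M ^ L * ((L - 1) * M ^ (L - 1)) ^ r * (M ^ L) ^ (D - r - 1) * M ^ r"
    using assms(3) by (simp add: card_PiE)
  also have "\<dots> = (L - 1) ^ r * (M ^ L * (M ^ (L - 1) * M) ^ r * (M ^ L) ^ (D - r - 1))"
    by (simp add: power_mult_distrib ac_simps)
  also have "M ^ (L - 1) * M = M ^ L"
    using L0 by (simp flip: power_Suc2)
  also have "M ^ L * (M ^ L) ^ r * (M ^ L) ^ (D - r - 1) = (M ^ L) ^ D"
    using rD by (simp flip: power_add power_Suc)
  finally show ?thesis .
qed

lemma exists_shift_family_few_collisions:
  assumes "0 < M" and count: "D * (L * M) * M * (D choose r) * (L - 1) ^ r < M ^ r"
  shows "\<exists>a \<in> PiE {..<D} (\<lambda>_. PiE {..<L} (\<lambda>_. {..<M})). \<forall>f<D. \<forall>b<L * M. \<forall>j<M.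
    card {g. g < D \<and> g \<noteq> f \<and> collide L M (a f) (a g) b j} < r"
proof (rule ccontr)
  let ?O = "PiE {..<D} (\<lambda>_. PiE {..<L} (\<lambda>_. {..<M}))"
  define Cs where "Cs = {..<D} \<times> {..<L * M} \<times> {..<M} \<times> {G. G \<subseteq> {..<D} \<and> card G = r}"
  define Bad where "Bad c = (case c of (f, b, j, G) \<Rightarrow>
      {a \<in> ?O. G \<subseteq> {..<D} - {f} \<and> (\<forall>g\<in>G. collide L M (a f) (a g) b j)})" for c
  assume contra: "\<not> ?thesis"
  have cover: "?O \<subseteq> (\<Union>c\<in>Cs. Bad c)"
  proof
    fix a assume a: "a \<in> ?O"
    then obtain f b j where fbj: "f < D" "b < L * M" "j < M"
      and "r \<le> card {g. g < D \<and> g \<noteq> f \<and> collide L M (a f) (a g) b j}"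
      using contra by (auto simp: not_less)
    then obtain G where G: "G \<subseteq> {g. g < D \<and> g \<noteq> f \<and> collide L M (a f) (a g) b j}" "card G = r"
      by (meson obtain_subset_with_card_n)
    then have "(f, b, j, G) \<in> Cs" and "a \<in> Bad (f, b, j, G)"
      using fbj a unfolding Cs_def Bad_def by auto
    then show "a \<in> (\<Union>c\<in>Cs. Bad c)" by blast
  qed
  have card_Bad: "card (Bad c) * M ^ r \<le> (L - 1) ^ r * (M ^ L) ^ D" if "c \<in> Cs" for c
  proof -
    obtain f b j G where c: "c = (f, b, j, G)" and "f < D" "b < L * M" "card G = r"
      using \<open>c \<in> Cs\<close> unfolding Cs_def by auto
    show ?thesis
    proof (cases "G \<subseteq> {..<D} - {f}")
      case True
      then have "Bad c = {a \<in> ?O. \<forall>g\<in>G. collide L M (a f) (a g) b j}"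
        unfolding Bad_def c by auto
      then show ?thesis
        using card_colliding_families_le[OF \<open>f < D\<close> True \<open>card G = r\<close> \<open>b < L * M\<close>] by simp
    qed (simp add: Bad_def c)
  qed
  have card_Cs: "card Cs = D * (L * M) * M * (D choose r)"
    unfolding Cs_def by (simp add: card_cartesian_product n_subsets)
  have "finite (\<Union>c\<in>Cs. Bad c)"
    by (rule finite_subset[of _ ?O]) (auto simp: Bad_def intro!: finite_PiE split: prod.splits)
  then have "card ?O \<le> card (\<Union>c\<in>Cs. Bad c)"
    using cover by (rule card_mono)
  also have "\<dots> \<le> (\<Sum>c\<in>Cs. card (Bad c))"
    by (rule card_UN_le) (simp add: Cs_def)
  finally have "card ?O * M ^ r \<le> (\<Sum>c\<in>Cs. card (Bad c)) * M ^ r"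
    by (rule mult_le_mono1)
  also have "\<dots> = (\<Sum>c\<in>Cs. card (Bad c) * M ^ r)"
    by (simp add: sum_distrib_right)
  also have "\<dots> \<le> (\<Sum>c\<in>Cs. (L - 1) ^ r * (M ^ L) ^ D)"
    using card_Bad by (rule sum_mono)
  also have "\<dots> = D * (L * M) * M * (D choose r) * (L - 1) ^ r * card ?O"
    by (simp add: card_Cs card_PiE)
  also have "\<dots> < M ^ r * card ?O"
    using count \<open>0 < M\<close> by (simp add: card_PiE)
  finally show False by simp
qed

lemma exists_fresh_repair_shift:
  fixes B :: "nat \<Rightarrow> nat \<Rightarrow> nat set" and p \<phi> :: "nat \<Rightarrow> nat"
  assumes self: "\<And>g b. g < D \<Longrightarrow> b < T \<Longrightarrow> b \<in> B g b"
    and few_conflicts: "\<And>f b b'. f < D \<Longrightarrow> b < T \<Longrightarrow> b' < T \<Longrightarrow>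
        card {g. g < D \<and> g \<noteq> f \<and> (B g b - {b}) \<inter> B f b' \<noteq> {}} < r"
    and D: "k * (2 * r + 1) \<le> D" and p: "p ` {..<k} \<subseteq> {..<T}"
    and J: "finite J" "J \<subseteq> {..<k}" "card J < k" and "j < k" and \<phi>: "\<phi> ` J \<subseteq> {..<D}"
  shows "\<exists>g<D. g \<notin> \<phi> ` J \<and> (B g (p j) - {p j}) \<inter> p ` {..<k} = {} \<and>
    (\<forall>i\<in>J. (B g (p j) - {p j}) \<inter> (B (\<phi> i) (p i) - {p i}) = {})"
proof -
  let ?H = "\<lambda>g. B g (p j) - {p j}"
  have pj: "p j < T" and D0: "0 < D"
    using p D \<open>j < k\<close> by (auto simp: nat_0_less_mult_iff)
  define conflicts where "conflicts f b' = {g. g < D \<and> ?H g \<inter> B f b' \<noteq> {}}" for f b'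
  have card_conflicts: "card (conflicts f b') \<le> r" if "f < D" "b' < T" for f b'
  proof -
    let ?S = "{g. g < D \<and> g \<noteq> f \<and> ?H g \<inter> B f b' \<noteq> {}}"
    have "card (conflicts f b') \<le> card (insert f ?S)"
      by (rule card_mono) (auto simp: conflicts_def)
    then show ?thesis
      using few_conflicts[OF that(1) pj that(2)] by (simp add: card_insert_if split: if_splits)
  qed
  define F where "F = \<phi> ` J \<union> (\<Union>z\<in>p ` {..<k}. conflicts 0 z) \<union> (\<Union>i\<in>J. conflicts (\<phi> i) (p i))"
  have "card F \<le> card J + card (p ` {..<k}) * r + card J * r"
  proof -
    have "card (\<Union>z\<in>p ` {..<k}. conflicts 0 z) \<le> card (p ` {..<k}) * r"
      using p D0 by (intro card_UN_le_card_mult card_conflicts) auto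
    moreover have "card (\<Union>i\<in>J. conflicts (\<phi> i) (p i)) \<le> card J * r"
      using p \<phi> J(1,2) by (intro card_UN_le_card_mult card_conflicts) auto
    ultimately show ?thesis
      unfolding F_def using card_Un_le card_image_le[OF J(1), of \<phi>] by (meson add_mono order_trans)
  qed
  also have "\<dots> < D"
  proof -
    have "card (p ` {..<k}) \<le> k"
      using card_image_le[of "{..<k}" p] by simp
    moreover have "k * (2 * r + 1) = k * r + k * r + k"
      by (simp add: algebra_simps)
    ultimately show ?thesis
      using D J(3) mult_le_mono1[of "card J" k r] mult_le_mono1[of "card (p ` {..<k})" k r]
      by linarith
  qed
  finally have "card F < card {..<D}" by simp
  moreover have "finite F"
    using J(1) unfolding F_def conflicts_def by auto
  ultimately obtain g where g: "g < D" "g \<notin> F"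
    using card_mono[of F "{..<D}"] by (meson lessThan_iff not_le subsetI)
  have "?H g \<inter> p ` {..<k} = {}"
  proof (rule ccontr)
    assume "?H g \<inter> p ` {..<k} \<noteq> {}"
    then obtain z where "z \<in> ?H g" "z \<in> p ` {..<k}" by blast
    then have "g \<in> conflicts 0 z"
      using self[OF D0, of z] p g(1) unfolding conflicts_def by blast
    then show False
      using g(2) \<open>z \<in> p ` {..<k}\<close> unfolding F_def by blast
  qed
  moreover have "?H g \<inter> (B (\<phi> i) (p i) - {p i}) = {}" if "i \<in> J" for i
  proof (rule ccontr)
    assume "?H g \<inter> (B (\<phi> i) (p i) - {p i}) \<noteq> {}"
    then have "g \<in> conflicts (\<phi> i) (p i)"
      using g(1) unfolding conflicts_def by blast
    then show False
      using g(2) that unfolding F_def by blast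
  qed
  moreover have "g \<notin> \<phi> ` J"
    using g(2) unfolding F_def by blast
  ultimately show ?thesis
    using g(1) by blast
qed

lemma exists_disjoint_repair_choice:
  fixes B :: "nat \<Rightarrow> nat \<Rightarrow> nat set" and p :: "nat \<Rightarrow> nat"
  assumes self: "\<And>g b. g < D \<Longrightarrow> b < T \<Longrightarrow> b \<in> B g b"
    and few_conflicts: "\<And>f b b'. f < D \<Longrightarrow> b < T \<Longrightarrow> b' < T \<Longrightarrow>
        card {g. g < D \<and> g \<noteq> f \<and> (B g b - {b}) \<inter> B f b' \<noteq> {}} < r"
    and D: "k * (2 * r + 1) \<le> D" and p: "p ` {..<k} \<subseteq> {..<T}" and J: "J \<subseteq> {..<k}"
  shows "\<exists>\<phi>. \<phi> ` J \<subseteq> {..<D} \<and> inj_on \<phi> J \<and>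
    (\<forall>j\<in>J. (B (\<phi> j) (p j) - {p j}) \<inter> p ` {..<k} = {}) \<and>
    disjoint_family_on (\<lambda>j. B (\<phi> j) (p j) - {p j}) J"
  using finite_subset[OF J finite_lessThan] J
proof (induction J rule: finite_subset_induct')
  case empty
  show ?case by (simp add: disjoint_family_on_def)
next
  case (insert j J)
  then obtain \<phi> where \<phi>: "\<phi> ` J \<subseteq> {..<D}" "inj_on \<phi> J"
      "\<forall>i\<in>J. (B (\<phi> i) (p i) - {p i}) \<inter> p ` {..<k} = {}"
      "disjoint_family_on (\<lambda>i. B (\<phi> i) (p i) - {p i}) J"
    by blast
  have "card J < k" "j < k"
    using insert.hyps psubset_card_mono[of "{..<k}" J] by auto
  then obtain g where "g < D" "g \<notin> \<phi> ` J" "(B g (p j) - {p j}) \<inter> p ` {..<k} = {}"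
      "\<forall>i\<in>J. (B g (p j) - {p j}) \<inter> (B (\<phi> i) (p i) - {p i}) = {}"
    using exists_fresh_repair_shift[OF self few_conflicts D p insert.hyps(1,3) _ _ \<phi>(1)] by blast
  then show ?case
    using \<phi> insert.hyps(4)
    by (intro exI[of _ "\<phi>(j := g)"])
      (auto simp: disjoint_family_on_insert disjoint_family_on_def inj_on_def image_subset_iff
        split: if_splits)
qed

lemma bit_eq_sum_remove_plus_sum:
  fixes f :: "'a \<Rightarrow> bit"
  assumes "finite A" "b \<in> A"
  shows "f b = (\<Sum>w\<in>A - {b}. f w) + (\<Sum>w\<in>A. f w)"
proof -
  have "(\<Sum>w\<in>A. f w) = f b + (\<Sum>w\<in>A - {b}. f w)"
    using assms by (rule sum.remove)
  moreover have "s + (y + s) = y" for s y :: bit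
    by (cases s; cases y) simp_all
  ultimately show ?thesis
    by (metis add.commute)
qed

text \<open>Data bit e is entry (e div T, e mod T) of an S \<times> T array. For l < T, bucket l stores
  column l; for g < D, bucket t + g stores at coordinate c * M + j the parity of row c over
  block j of the shift vector a g; all other buckets are single zero padding bits. Array entries
  at positions n and beyond read as 0.\<close>

definition data_entry :: "nat \<Rightarrow> nat \<Rightarrow> (nat \<Rightarrow> bit) \<Rightarrow> nat \<Rightarrow> nat \<Rightarrow> bit" where
  "data_entry n T x c w = (if c * T + w < n then x (c * T + w) else 0)"

definition parity_code_sizes :: "nat \<Rightarrow> nat \<Rightarrow> nat \<Rightarrow> nat \<Rightarrow> nat \<Rightarrow> nat \<Rightarrow> nat" where
  "parity_code_sizes T t D M S l = (if l < T then S else if t \<le> l \<and> l < t + D then M * S else 1)"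

definition parity_code_matrix ::
    "nat \<Rightarrow> nat \<Rightarrow> nat \<Rightarrow> nat \<Rightarrow> (nat \<Rightarrow> nat \<Rightarrow> nat) \<Rightarrow> nat \<Rightarrow> nat \<Rightarrow> nat \<Rightarrow> bit" where
  "parity_code_matrix T t D M a l c e =
    (if l < T then of_bool (e = c * T + l)
     else if t \<le> l \<and> l < t + D then
       of_bool (e div T = c div M \<and> e mod T \<in> block T M (a (l - t)) (c mod M))
     else 0)"

lemma sum_parity_code_sizes:
  assumes "T \<le> t" "D \<le> t"
  shows "(\<Sum>l<2 * t. parity_code_sizes T t D M S l) = T * S + (t - T) + D * (M * S) + (t - D)"
proof -
  have "(\<Sum>l<2 * t. parity_code_sizes T t D M S l) =
      (\<Sum>l\<in>{0..<T}. parity_code_sizes T t D M S l) + (\<Sum>l\<in>{T..<t}. parity_code_sizes T t D M S l) +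
      (\<Sum>l\<in>{t..<t + D}. parity_code_sizes T t D M S l) + (\<Sum>l\<in>{t + D..<2 * t}. parity_code_sizes T t D M S l)"
    using assms by (simp add: sum.atLeastLessThan_concat atLeast0LessThan[symmetric])
  also have "\<dots> = T * S + (t - T) + D * (M * S) + (t - D)"
    using assms by (simp add: parity_code_sizes_def)
  finally show ?thesis .
qed

lemma bucket_val_data_bucket:
  assumes "l < T"
  shows "bucket_val n (parity_code_matrix T t D M a) l x c = data_entry n T x c l"
proof -
  have "bucket_val n (parity_code_matrix T t D M a) l x c = (\<Sum>e\<in>{c * T + l} \<inter> {..<n}. x e)"
    using assms by (intro bucket_val_indicator) (simp add: parity_code_matrix_def)
  then show ?thesis
    by (simp add: data_entry_def Int_insert_left)
qed

lemma bucket_val_parity_bucket: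
  assumes "T \<le> t" "g < D" "j < M"
  shows "bucket_val n (parity_code_matrix T t D M a) (t + g) x (c * M + j)
    = (\<Sum>w\<in>block T M (a g) j. data_entry n T x c w)"
proof -
  let ?E = "(\<lambda>w. c * T + w) ` block T M (a g) j"
  have "e div T = c \<and> e mod T \<in> block T M (a g) j \<longleftrightarrow> e \<in> ?E" for e
  proof
    assume "e div T = c \<and> e mod T \<in> block T M (a g) j"
    then show "e \<in> ?E"
      by (metis div_mult_mod_eq image_eqI mult.commute)
  next
    assume "e \<in> ?E"
    then show "e div T = c \<and> e mod T \<in> block T M (a g) j"
      by (auto simp: block_def)
  qed
  then have "bucket_val n (parity_code_matrix T t D M a) (t + g) x (c * M + j) = (\<Sum>e\<in>?E \<inter> {..<n}. x e)"
    using assms by (intro bucket_val_indicator) (simp add: parity_code_matrix_def)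
  also have "\<dots> = (\<Sum>e\<in>?E. if e < n then x e else 0)"
    by (simp add: sum.inter_restrict finite_subset[OF block_subset])
  also have "\<dots> = (\<Sum>w\<in>block T M (a g) j. data_entry n T x c w)"
    by (simp add: sum.reindex data_entry_def)
  finally show ?thesis .
qed

lemma parity_code_repair:
  assumes "T \<le> t" "g < D" "b < T" "0 < M"
  shows "data_entry n T x c b =
    (\<Sum>l\<in>insert (t + g) (block_of T M (a g) b - {b}). bucket_val n (parity_code_matrix T t D M a) l x
      (if l < T then c else c * M + block_index M (a g) b))"
proof -
  let ?A = "block_of T M (a g) b" and ?G = "parity_code_matrix T t D M a"
  let ?sel = "\<lambda>l. if l < T then c else c * M + block_index M (a g) b"
  have A1: "?A \<subseteq> {..<T}"
    unfolding block_of_def by (rule block_subset)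
  then have A: "?A \<subseteq> {..<T}" "finite ?A" "b \<in> ?A"
    using finite_subset block_of_self[OF assms(3)] by auto
  have "data_entry n T x c b = (\<Sum>w\<in>?A - {b}. data_entry n T x c w) + (\<Sum>w\<in>?A. data_entry n T x c w)"
    using A(2,3) by (rule bit_eq_sum_remove_plus_sum)
  also have "(\<Sum>w\<in>?A - {b}. data_entry n T x c w) = (\<Sum>l\<in>?A - {b}. bucket_val n ?G l x c)"
    using A(1) by (intro sum.cong) (auto simp: bucket_val_data_bucket)
  also have "(\<Sum>w\<in>?A. data_entry n T x c w) = bucket_val n ?G (t + g) x (c * M + block_index M (a g) b)"
    using assms by (simp add: bucket_val_parity_bucket block_of_def block_index_def)
  also have "(\<Sum>l\<in>?A - {b}. bucket_val n ?G l x c) + bucket_val n ?G (t + g) x (c * M + block_index M (a g) b)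
      = (\<Sum>l\<in>insert (t + g) (?A - {b}). bucket_val n ?G l x (?sel l))"
  proof -
    have "(\<Sum>l\<in>insert (t + g) (?A - {b}). bucket_val n ?G l x (?sel l))
        = bucket_val n ?G (t + g) x (?sel (t + g)) + (\<Sum>l\<in>?A - {b}. bucket_val n ?G l x (?sel l))"
      using A(1,2) assms(1) by (intro sum.insert) auto
    also have "(\<Sum>l\<in>?A - {b}. bucket_val n ?G l x (?sel l)) = (\<Sum>l\<in>?A - {b}. bucket_val n ?G l x c)"
      using A(1) by (intro sum.cong) auto
    also have "?sel (t + g) = c * M + block_index M (a g) b"
      using assms(1) by simp
    finally show ?thesis
      by (simp only: add.commute)
  qed
  finally show ?thesis .
qed

lemma parity_code_direct_read:
  assumes "b < T" "c < S" "c * T + b < n"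
  shows "\<exists>sel. (\<forall>l\<in>{b}. sel l < parity_code_sizes T t D M S l) \<and>
    (\<forall>x. x (c * T + b) = (\<Sum>l\<in>{b}. bucket_val n (parity_code_matrix T t D M a) l x (sel l)))"
  using assms
  by (intro exI[of _ "\<lambda>_. c"]) (simp add: parity_code_sizes_def bucket_val_data_bucket data_entry_def)

lemma parity_code_repair_read:
  assumes "T \<le> t" "g < D" "b < T" "0 < M" "c < S" "c * T + b < n"
  shows "\<exists>sel. (\<forall>l\<in>insert (t + g) (block_of T M (a g) b - {b}). sel l < parity_code_sizes T t D M S l) \<and>
    (\<forall>x. x (c * T + b) = (\<Sum>l\<in>insert (t + g) (block_of T M (a g) b - {b}).
      bucket_val n (parity_code_matrix T t D M a) l x (sel l)))"
proof (intro exI conjI)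
  let ?sel = "\<lambda>l. if l < T then c else c * M + block_index M (a g) b"
  have "block_index M (a g) b < M"
    using assms(4) by (simp add: block_index_def)
  then have "c * M + block_index M (a g) b < (c + 1) * M"
    by simp
  also have "\<dots> \<le> M * S"
    using assms(5) mult_le_mono1[of "c + 1" S M] by (simp add: mult.commute)
  finally show "\<forall>l\<in>insert (t + g) (block_of T M (a g) b - {b}). ?sel l < parity_code_sizes T t D M S l"
    using assms(1,2,5) block_subset[of T M "a g"] by (auto simp: parity_code_sizes_def block_of_def)
  show "\<forall>x. x (c * T + b) = (\<Sum>l\<in>insert (t + g) (block_of T M (a g) b - {b}).
      bucket_val n (parity_code_matrix T t D M a) l x (?sel l))"
    using parity_code_repair[OF assms(1-4)] assms(6) by (simp add: data_entry_def)
qed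

text \<open>Requests whose column already occurred earlier (the set J) are served by a parity
  bucket t + \<phi> j together with the rest of their block H j; all other requests read their
  own column directly.\<close>
lemma repair_sets_disjoint:
  fixes p \<phi> :: "nat \<Rightarrow> nat" and H :: "nat \<Rightarrow> nat set" and J :: "nat set" and t :: nat
  defines "C j \<equiv> if j \<in> J then insert (t + \<phi> j) (H j) else {p j}"
  assumes J: "J = {j. j < k \<and> (\<exists>i<j. p i = p j)}"
    and bounds: "T \<le> t" "\<forall>j<k. p j < T" "\<forall>j\<in>J. H j \<subseteq> {..<T}"
    and \<phi>: "inj_on \<phi> J" "\<forall>j\<in>J. H j \<inter> p ` {..<k} = {}" "disjoint_family_on H J"
    and j: "j1 < k" "j2 < k" "j1 \<noteq> j2"
  shows "C j1 \<inter> C j2 = {}"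
proof -
  have H_t: "t + g \<notin> H j" if "j \<in> J" for g j
    using bounds(1,3) that by fastforce
  have p_t: "p j \<noteq> t + g" if "j < k" for j g
    using bounds(1,2) that by fastforce
  show ?thesis
  proof (cases "j1 \<in> J"; cases "j2 \<in> J")
    assume "j1 \<in> J" "j2 \<in> J"
    then have "\<phi> j1 \<noteq> \<phi> j2" "H j1 \<inter> H j2 = {}"
      using \<phi>(1,3) j(3) by (auto simp: inj_on_eq_iff disjoint_family_on_def)
    with \<open>j1 \<in> J\<close> \<open>j2 \<in> J\<close> show ?thesis
      using H_t by (auto simp: C_def)
  next
    assume "j1 \<in> J" "j2 \<notin> J"
    then show ?thesis
      using \<phi>(2) j p_t[of j2] by (auto simp: C_def)
  next
    assume "j1 \<notin> J" "j2 \<in> J"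
    then show ?thesis
      using \<phi>(2) j p_t[of j1, symmetric] by (auto simp: C_def)
  next
    assume "j1 \<notin> J" "j2 \<notin> J"
    then have "p j1 \<noteq> p j2"
      using j unfolding J by (metis (mono_tags, lifting) mem_Collect_eq nat_neq_iff)
    with \<open>j1 \<notin> J\<close> \<open>j2 \<notin> J\<close> show ?thesis
      by (simp add: C_def)
  qed
qed

lemma is_BAC_parity_code:
  fixes a :: "nat \<Rightarrow> nat \<Rightarrow> nat"
  assumes "0 < k" "0 < M" "1 \<le> S" "L * M \<le> t" "D \<le> t" "n \<le> L * M * S" "k * (2 * r + 1) \<le> D"
    and few_collisions: "\<forall>f<D. \<forall>b<L * M. \<forall>j<M.
      card {g. g < D \<and> g \<noteq> f \<and> collide L M (a f) (a g) b j} < r"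
  shows "is_BAC n (L * M * S + (t - L * M) + D * (M * S) + (t - D)) k (2 * t)"
proof -
  define T where "T = L * M"
  let ?Nb = "parity_code_sizes T t D M S" and ?G = "parity_code_matrix T t D M a"
  have "T \<le> t" "n \<le> T * S"
    using assms by (simp_all add: T_def)
  show ?thesis
    unfolding T_def[symmetric]
  proof (rule is_BAC_of_recovery_sets[where Nb = ?Nb and G = ?G])
    show "\<forall>l<2 * t. 1 \<le> ?Nb l"
      using assms by (simp add: parity_code_sizes_def)
    show "(\<Sum>l<2 * t. ?Nb l) = T * S + (t - T) + D * (M * S) + (t - D)"
      using \<open>T \<le> t\<close> assms(5) by (rule sum_parity_code_sizes)
    show "0 < k" by (rule assms(1))
    fix idx assume idx: "\<forall>j<k. idx j < n"
    define p row where "p j = idx j mod T" and "row j = idx j div T" for j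
    have "0 < T"
      using idx \<open>0 < k\<close> \<open>n \<le> T * S\<close> by (cases T) auto
    then have p: "p j < T" and idx_eq: "idx j = row j * T + p j" for j
      by (simp_all add: p_def row_def)
    have row: "row j < S" if "j < k" for j
    proof -
      have "idx j < T * S"
        using idx that \<open>n \<le> T * S\<close> by (meson less_le_trans)
      then show ?thesis
        using \<open>0 < T\<close> by (simp add: row_def div_less_iff_less_mult mult.commute)
    qed
    define J where "J = {j. j < k \<and> (\<exists>i<j. p i = p j)}"
    let ?H = "\<lambda>g j. block_of T M (a g) (p j) - {p j}"
    obtain \<phi> where \<phi>: "\<phi> ` J \<subseteq> {..<D}" "inj_on \<phi> J"
        "\<forall>j\<in>J. ?H (\<phi> j) j \<inter> p ` {..<k} = {}" "disjoint_family_on (\<lambda>j. ?H (\<phi> j) j) J"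
    proof (atomize_elim, rule exists_disjoint_repair_choice)
      show "\<And>g b. b < T \<Longrightarrow> b \<in> block_of T M (a g) b"
        by (rule block_of_self)
    qed (use few_conflicts_if_few_collisions[OF few_collisions \<open>0 < M\<close>] assms p J_def in
        \<open>auto simp: T_def\<close>)
    define C where "C j = (if j \<in> J then insert (t + \<phi> j) (?H (\<phi> j) j) else {p j})" for j
    show "\<exists>C. (\<forall>j<k. C j \<subseteq> {..<2 * t}) \<and> (\<forall>j1<k. \<forall>j2<k. j1 \<noteq> j2 \<longrightarrow> C j1 \<inter> C j2 = {}) \<and>
      (\<forall>j<k. \<exists>sel. (\<forall>l\<in>C j. sel l < ?Nb l) \<and> (\<forall>x. x (idx j) = (\<Sum>l\<in>C j. bucket_val n ?G l x (sel l))))"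
    proof (intro exI[of _ C] conjI allI impI)
      have H: "?H g j \<subseteq> {..<T}" for g j
        using block_subset unfolding block_of_def by blast
      show "C j \<subseteq> {..<2 * t}" if "j < k" for j
        using H[of "\<phi> j" j] \<phi>(1) p[of j] \<open>T \<le> t\<close> \<open>D \<le> t\<close> by (auto simp: C_def)
      show "C j1 \<inter> C j2 = {}" if "j1 < k" "j2 < k" "j1 \<noteq> j2" for j1 j2
        unfolding C_def using J_def \<open>T \<le> t\<close> p H \<phi>(2-4) that by (intro repair_sets_disjoint) auto
      show "\<exists>sel. (\<forall>l\<in>C j. sel l < ?Nb l) \<and> (\<forall>x. x (idx j) = (\<Sum>l\<in>C j. bucket_val n ?G l x (sel l)))"
        if "j < k" for j
        using parity_code_repair_read[OF \<open>T \<le> t\<close> _ p \<open>0 < M\<close> row[OF that]]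
          parity_code_direct_read[OF p row[OF that]] idx that \<phi>(1)
        unfolding C_def idx_eq by auto
    qed
  qed
qed

lemma pow_self_le_exp_fact: "real r ^ r \<le> exp (real r) * fact r"
proof -
  have "summable (\<lambda>i. real r ^ i / fact i)"
    using summable_exp[of "real r"] by (simp add: divide_inverse mult.commute)
  then have "(\<Sum>i\<in>{r}. real r ^ i / fact i) \<le> (\<Sum>i. real r ^ i / fact i)"
    by (rule sum_le_suminf) auto
  also have "(\<Sum>i. real r ^ i / fact i) = exp (real r)"
    using exp_converges[of "real r"] by (simp add: sums_iff divide_inverse mult.commute)
  finally show ?thesis
    by (simp add: divide_le_eq mult.commute)
qed

lemma binomial_le_exp_ratio_pow:
  assumes "0 < r"
  shows "real (n choose r) \<le> (exp 1 * real n / real r) ^ r"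
proof -
  have choose_fact: "real (n choose r) * fact r \<le> real n ^ r"
    using binomial_fact_pow[of n r] by (metis of_nat_fact of_nat_le_iff of_nat_mult of_nat_power)
  have "real (n choose r) * real r ^ r \<le> real (n choose r) * (exp (real r) * fact r)"
    by (intro mult_left_mono pow_self_le_exp_fact) simp
  also have "\<dots> = exp (real r) * (real (n choose r) * fact r)"
    by simp
  also have "\<dots> \<le> exp (real r) * real n ^ r"
    using choose_fact by (intro mult_left_mono) simp_all
  also have "\<dots> = (exp 1 * real n / real r) ^ r * real r ^ r"
    using assms by (simp add: power_divide power_mult_distrib flip: exp_of_nat_mult)
  finally show ?thesis
    using assms by simp
qed

lemma exp_3_less_21: "exp (3::real) < 21"
proof -
  have "exp (3::real) = exp 1 ^ 3"
    by (simp flip: exp_of_nat_mult)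
  also have "\<dots> < (272 / 100) ^ 3"
    by (intro power_strict_mono e_less_272) auto
  also have "\<dots> < 21"
    by (simp add: power3_eq_cube)
  finally show ?thesis .
qed

lemma collision_count_condition:
  assumes "1 \<le> r" "1 \<le> L" "1 \<le> k" "D = 3 * k * r" "M = 64 * k * L"
    and small: "real (D * (L * M) * M) < exp (2 * real r)"
  shows "D * (L * M) * M * (D choose r) * (L - 1) ^ r < M ^ r"
proof -
  have "real (D choose r) \<le> (3 * exp 1 * real k) ^ r"
    using binomial_le_exp_ratio_pow[of r D] assms(1,4) by (simp add: ac_simps)
  then have "real (D * (L * M) * M * (D choose r) * (L - 1) ^ r)
      \<le> real (D * (L * M) * M) * (3 * exp 1 * real k) ^ r * real L ^ r"
    by (simp only: of_nat_mult of_nat_power) (intro mult_mono power_mono; simp)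
  also have "\<dots> = real (D * (L * M) * M) * (3 * exp 1 * real k * real L) ^ r"
    by (simp add: power_mult_distrib)
  also have "\<dots> < exp (2 * real r) * (3 * exp 1 * real k * real L) ^ r"
    using small assms(2,3) by (intro mult_strict_right_mono) auto
  also have "\<dots> = (3 * exp 3 * real k * real L) ^ r"
    by (simp add: power_mult_distrib mult_exp_exp exp_of_nat_mult[symmetric] mult.commute)
  also have "\<dots> \<le> (64 * real k * real L) ^ r"
    using exp_3_less_21 by (intro power_mono mult_right_mono) auto
  also have "\<dots> = real (M ^ r)"
    using assms(5) by simp
  finally show ?thesis by linarith
qed

lemma parity_code_length_le:
  assumes "0 < L" "0 < M" "L * M \<le> t" "S = nat \<lceil>real n / real (L * M)\<rceil>"
  shows "real (L * M * S + (t - L * M) + D * (M * S) + (t - D))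
    \<le> real n + 3 * real t + real D * real n / real L + real D * real t"
proof -
  have "M \<le> L * M"
    using assms(1) by simp
  then have M_t: "real M \<le> real t"
    using assms(3) by linarith
  have S: "real S \<le> real n / real (L * M) + 1"
    using assms(4) of_int_ceiling_le_add_one[of "real n / real (L * M)"] by simp
  have "real (L * M * S) = real (L * M) * real S"
    by (rule of_nat_mult)
  also have "\<dots> \<le> real (L * M) * (real n / real (L * M) + 1)"
    using S by (intro mult_left_mono) auto
  also have "\<dots> = real n + real (L * M)"
    using assms(1,2) by (simp add: field_simps)
  finally have data: "real (L * M * S) \<le> real n + real t"
    using assms(3) by linarith
  have "real (M * S) = real M * real S"
    by (rule of_nat_mult)
  also have "\<dots> \<le> real M * (real n / real (L * M) + 1)"
    using S by (intro mult_left_mono) auto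
  also have "\<dots> = real n / real L + real M"
    using assms(1,2) by (simp add: field_simps)
  finally have "real (M * S) \<le> real n / real L + real t"
    using M_t by linarith
  then have "real (D * (M * S)) \<le> real D * (real n / real L + real t)"
    unfolding of_nat_mult[of D] by (intro mult_left_mono) auto
  then show ?thesis
    using data by (simp add: distrib_left of_nat_diff)
qed

lemma is_BAC_shift_design:
  assumes "0 < k" "0 < n" "1 \<le> r" "1 \<le> L" "L * M \<le> t" "D \<le> t"
    and "D = 3 * k * r" "M = 64 * k * L" "S = nat \<lceil>real n / real (L * M)\<rceil>"
    and "real (D * (L * M) * M) < exp (2 * real r)"
  shows "is_BAC n (L * M * S + (t - L * M) + D * (M * S) + (t - D)) k (2 * t)"
proof -
  have "0 < M"
    using assms(1,4,8) by simp
  have "D * (L * M) * M * (D choose r) * (L - 1) ^ r < M ^ r"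
    using assms(1) by (intro collision_count_condition[OF assms(3,4) _ assms(7,8,10)]) simp
  then obtain a where
    "\<forall>f<D. \<forall>b<L * M. \<forall>j<M. card {g. g < D \<and> g \<noteq> f \<and> collide L M (a f) (a g) b j} < r"
    using exists_shift_family_few_collisions[OF \<open>0 < M\<close>] by blast
  moreover have "real n \<le> real (L * M) * real S"
  proof -
    have "real n / real (L * M) \<le> real S"
      using assms(9) le_of_int_ceiling[of "real n / real (L * M)"] by simp
    then show ?thesis
      using \<open>0 < M\<close> assms(4) by (simp add: divide_le_eq mult.commute)
  qed
  then have "n \<le> L * M * S"
    by (metis of_nat_le_iff of_nat_mult)
  moreover from this have "1 \<le> S"
    using \<open>0 < n\<close> by (cases S) auto
  moreover have "k * (2 * r + 1) \<le> D"
    using assms(3,7) by simp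
  ultimately show ?thesis
    using assms \<open>0 < M\<close> by (intro is_BAC_parity_code) auto
qed

lemma shift_design_length_estimate:
  fixes a b l t D L k :: real
  assumes "1 \<le> a" "1 \<le> b" "1 \<le> l" "0 \<le> k" "k \<le> b\<^sup>2" "0 \<le> t" "t \<le> a\<^sup>2" "0 \<le> D"
    and "D \<le> 7 * k * l" "a / (16 * b) \<le> L"
  shows "3 * t + D * a ^ 4 / L + D * t \<le> 128 * b ^ 3 * a ^ 3 * l"
proof -
  have "0 < a / (16 * b)"
    using assms(1,2) by simp
  have a2: "a\<^sup>2 \<le> a ^ 3" and b2: "b\<^sup>2 \<le> b ^ 3"
    using assms(1,2) by (simp_all add: power_increasing)
  have kb: "k * b \<le> b ^ 3"
    using assms(2,4,5) mult_right_mono[OF assms(5), of b] by (simp add: power2_eq_square power3_eq_cube)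
  have "D * a ^ 4 / L \<le> D * a ^ 4 / (a / (16 * b))"
    using assms(8,10) \<open>0 < a / (16 * b)\<close>
    by (intro divide_left_mono) (simp_all add: mult_pos_pos del: times_divide_eq_right)
  also have "\<dots> = 16 * D * b * a ^ 3"
    using assms(1,2) by (simp add: field_simps power_eq_if)
  also have "\<dots> \<le> 16 * (7 * k * l) * b * a ^ 3"
    using assms(1,2,9) by (intro mult_right_mono mult_left_mono) auto
  also have "\<dots> = 112 * (k * b) * a ^ 3 * l"
    by simp
  also have "\<dots> \<le> 112 * b ^ 3 * a ^ 3 * l"
    using kb assms(1,3) by (intro mult_right_mono mult_left_mono) auto
  finally have parity: "D * a ^ 4 / L \<le> 112 * b ^ 3 * a ^ 3 * l" .
  have "1 \<le> b ^ 3 * l"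
    using assms(2,3) mult_mono[of 1 "b ^ 3" 1 l] by (simp add: one_le_power)
  then have a3: "a ^ 3 \<le> b ^ 3 * a ^ 3 * l"
    using assms(1) mult_left_mono[of 1 "b ^ 3 * l" "a ^ 3"] by (simp add: ac_simps)
  then have "3 * t \<le> 3 * b ^ 3 * a ^ 3 * l"
    using assms(7) a2 by linarith
  moreover have "D * t \<le> 7 * b ^ 3 * a ^ 3 * l"
  proof -
    have "D * t \<le> (7 * k * l) * a\<^sup>2"
      using assms(6,7,8,9) by (intro mult_mono) auto
    also have "\<dots> = 7 * l * (k * a\<^sup>2)"
      by simp
    also have "k * a\<^sup>2 \<le> b ^ 3 * a ^ 3"
      using assms(2,4,5) b2 a2 by (intro mult_mono) auto
    then have "7 * l * (k * a\<^sup>2) \<le> 7 * l * (b ^ 3 * a ^ 3)"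
      using assms(3) by (intro mult_left_mono) auto
    also have "\<dots> = 7 * b ^ 3 * a ^ 3 * l"
      by simp
    finally show ?thesis .
  qed
  moreover have "0 \<le> a ^ 3"
    using assms(1) by simp
  ultimately show ?thesis
    using parity a3 by linarith
qed

lemma nat_floor_sqrt_bounds:
  fixes x :: real
  assumes "4 \<le> x"
  shows "1 \<le> nat \<lfloor>sqrt x\<rfloor>" "sqrt x / 2 \<le> real (nat \<lfloor>sqrt x\<rfloor>)" "real (nat \<lfloor>sqrt x\<rfloor>) ^ 2 \<le> x"
proof -
  have "2 \<le> sqrt x"
    using real_sqrt_le_mono[OF assms] by simp
  then have floor: "sqrt x - 1 < real (nat \<lfloor>sqrt x\<rfloor>)" "real (nat \<lfloor>sqrt x\<rfloor>) \<le> sqrt x"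
    by linarith+
  then show "1 \<le> nat \<lfloor>sqrt x\<rfloor>" "sqrt x / 2 \<le> real (nat \<lfloor>sqrt x\<rfloor>)"
    using \<open>2 \<le> sqrt x\<close> by linarith+
  have "real (nat \<lfloor>sqrt x\<rfloor>) ^ 2 \<le> sqrt x ^ 2"
    using floor(2) by (intro power_mono) auto
  then show "real (nat \<lfloor>sqrt x\<rfloor>) ^ 2 \<le> x"
    using assms by simp
qed

lemma cube_less_exp_double:
  assumes "D \<le> t" "L * M \<le> t" "M \<le> t" "real t \<le> q" "1 < q" "2 * ln q \<le> real r"
  shows "real (D * (L * M) * M) < exp (2 * real r)"
proof -
  have "D * (L * M) * M \<le> t ^ 3"
    using mult_le_mono[OF mult_le_mono[OF assms(1,2)] assms(3)] by (simp add: power3_eq_cube)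
  then have "real (D * (L * M) * M) \<le> real t ^ 3"
    by (metis of_nat_le_iff of_nat_power)
  also have "\<dots> \<le> q ^ 3"
    using assms(4) by (intro power_mono) auto
  also have "\<dots> < q ^ 4"
    using assms(5) by (intro power_strict_increasing) auto
  also have "\<dots> = exp (2 * (2 * ln q))"
    using assms(5) exp_of_nat_mult[of 4 "ln q"] by simp
  also have "\<dots> \<le> exp (2 * real r)"
    using assms(6) by simp
  finally show ?thesis .
qed

lemma grid_side_bounds:
  fixes a b :: real and k s t :: nat
  defines "L \<equiv> nat \<lfloor>sqrt (real t / real (64 * k))\<rfloor>"
  assumes "0 < k" "0 < b" "real k * real s = b\<^sup>2" "a\<^sup>2 / real s \<le> real t" "16 * b \<le> a"
  shows "1 \<le> L" "a / (16 * b) \<le> real L" "L * (64 * k * L) \<le> t"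
proof -
  define x where "x = real t / real (64 * k)"
  have "0 < s"
    using assms(2-4) by (cases s) auto
  have "a / (8 * b) \<le> sqrt x"
  proof -
    have "a\<^sup>2 / (64 * b\<^sup>2) \<le> x"
      using assms(2,5) \<open>0 < s\<close> by (simp add: x_def flip: assms(4)) (simp add: field_simps)
    then have "sqrt (a\<^sup>2 / (64 * b\<^sup>2)) \<le> sqrt x"
      by simp
    then show ?thesis
      using assms(3,6) by (simp add: real_sqrt_divide real_sqrt_mult)
  qed
  moreover have "2 \<le> a / (8 * b)"
    using assms(3,6) by (simp add: le_divide_eq)
  ultimately have "4 \<le> x"
    by (metis order_trans real_sqrt_four real_sqrt_le_iff)
  then have L: "1 \<le> L" "sqrt x / 2 \<le> real L" "real L ^ 2 \<le> x"
    using nat_floor_sqrt_bounds unfolding L_def x_def by auto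
  then show "1 \<le> L" "a / (16 * b) \<le> real L"
    using \<open>a / (8 * b) \<le> sqrt x\<close> by auto
  have "real (L * (64 * k * L)) = real L ^ 2 * real (64 * k)"
    by (simp add: power2_eq_square)
  also have "\<dots> \<le> real t"
    using L(3) assms(2) by (simp add: x_def le_divide_eq)
  finally show "L * (64 * k * L) \<le> t"
    by (simp only: of_nat_le_iff)
qed

lemma parity_bucket_count_bounds:
  fixes k s t r :: nat and a b l :: real
  assumes "3 \<le> l" "real r \<le> 2 * l + 1" "0 < s" "real k * real s = b\<^sup>2" "1 \<le> b"
    and "64 * (b ^ 3 * l) < a" "1 \<le> a" "a\<^sup>2 / real s \<le> real t"
  shows "real (3 * k * r) \<le> 7 * real k * l" "3 * k * r \<le> t"
proof -
  show D_le: "real (3 * k * r) \<le> 7 * real k * l"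
    using assms(1,2) mult_left_mono[of "3 * real r" "7 * l" "real k"] by simp
  have "b\<^sup>2 \<le> b ^ 3"
    using assms(5) power_increasing[of 2 3 b] by simp
  then have "b\<^sup>2 * l \<le> b ^ 3 * l" "0 \<le> b ^ 3 * l"
    using assms(1,5) by (simp_all add: mult_right_mono)
  have "real (3 * k * r) * real s \<le> 7 * (b\<^sup>2 * l)"
    using mult_right_mono[OF D_le, of "real s"] by (simp add: ac_simps flip: assms(4))
  also have "\<dots> < a"
    using assms(6) \<open>b\<^sup>2 * l \<le> b ^ 3 * l\<close> \<open>0 \<le> b ^ 3 * l\<close> by linarith
  also have "\<dots> \<le> a\<^sup>2"
    using assms(7) by (simp add: power2_eq_square)
  finally have "real (3 * k * r) \<le> a\<^sup>2 / real s"
    using assms(3) by (simp add: le_divide_eq)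
  then show "3 * k * r \<le> t"
    using assms(8) by linarith
qed

lemma exists_BAC_for_square:
  fixes q k s :: nat
  assumes "21 \<le> q" "0 < k" "0 < s"
    and small: "64 * sqrt (real (k * s)) ^ 3 * ln (real q) < sqrt (real q)"
  shows "\<exists>N. is_BAC (q\<^sup>2) N k (2 * nat \<lceil>real q / real s\<rceil>) \<and>
    real N \<le> real q ^ 2 + 128 * sqrt (real (k * s)) ^ 3 * sqrt (real q) ^ 3 * ln (real q)"
proof -
  define a b l where "a = sqrt (real q)" and "b = sqrt (real (k * s))" and "l = ln (real q)"
  have q_eq: "real q = a\<^sup>2" and ks_eq: "real k * real s = b\<^sup>2"
    by (simp_all add: a_def b_def)
  have "1 \<le> k * s"
    using assms(2,3) by (simp add: Suc_le_eq)
  then have a1: "1 \<le> a" and b1: "1 \<le> b" and l3: "3 \<le> l"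
    using assms(1) exp_3_less_21 by (simp_all add: a_def b_def l_def ln_ge_iff flip: of_nat_mult)
  have small': "64 * (b ^ 3 * l) < a"
    using small by (simp add: a_def b_def l_def mult.assoc)
  have b3: "b \<le> b ^ 3"
    using b1 power_increasing[of 1 3 b] by simp
  have bl: "3 * b ^ 3 \<le> b ^ 3 * l"
    using mult_left_mono[OF l3, of "b ^ 3"] b1 by (simp add: mult.commute)
  define t where "t = nat \<lceil>real q / real s\<rceil>"
  have "real q / real s \<le> real q"
    using assms(3) by (simp add: divide_le_eq mult_le_cancel_left1)
  then have "\<lceil>real q / real s\<rceil> \<le> int q"
    by (simp add: ceiling_le_iff)
  then have t: "real q / real s \<le> real t" "real t \<le> real q"
    unfolding t_def by linarith+
  have "16 * b \<le> a"
    using small' bl b1 b3 by linarith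
  define L M r D where "L = nat \<lfloor>sqrt (real t / real (64 * k))\<rfloor>" and "M = 64 * k * L"
    and "r = nat \<lceil>2 * l\<rceil>" and "D = 3 * k * r"
  have L: "1 \<le> L" "a / (16 * b) \<le> real L" and LM_t: "L * M \<le> t"
    using grid_side_bounds[OF assms(2) _ ks_eq _ \<open>16 * b \<le> a\<close>] b1 t(1)
    unfolding L_def M_def q_eq by auto
  have r: "2 * l \<le> real r" "real r \<le> 2 * l + 1" "1 \<le> r"
    using l3 unfolding r_def by linarith+
  have D_le: "real D \<le> 7 * real k * l" and D_t: "D \<le> t"
    using parity_bucket_count_bounds[OF l3 r(2) assms(3) ks_eq b1 small' a1] t(1)
    unfolding D_def q_eq by auto
  define S where "S = nat \<lceil>real (q\<^sup>2) / real (L * M)\<rceil>"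
  define N where "N = L * M * S + (t - L * M) + D * (M * S) + (t - D)"
  have "is_BAC (q\<^sup>2) N k (2 * t)"
    unfolding N_def
  proof (rule is_BAC_shift_design)
    show "real (D * (L * M) * M) < exp (2 * real r)"
      using LM_t D_t t(2) assms(1) r(1) L(1)
      by (intro cube_less_exp_double[where q = "real q"]) (auto simp: l_def M_def intro: le_trans[OF _ LM_t])
  qed (use assms L(1) LM_t D_t r(3) M_def D_def S_def in auto)
  moreover have "real N \<le> real q ^ 2 + 128 * b ^ 3 * a ^ 3 * l"
  proof -
    have qa: "real q ^ 2 = a ^ 4" "real (q\<^sup>2) = a ^ 4"
      using q_eq by simp_all
    have "real N \<le> a ^ 4 + 3 * real t + real D * a ^ 4 / real L + real D * real t"
      unfolding N_def qa(2)[symmetric] using L(1) assms(2) LM_t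
      by (intro parity_code_length_le) (auto simp: M_def S_def)
    moreover have "3 * real t + real D * a ^ 4 / real L + real D * real t \<le> 128 * b ^ 3 * a ^ 3 * l"
      using a1 b1 l3 t(2) D_le L(2) assms(2,3)
      by (intro shift_design_length_estimate) (simp_all add: q_eq mult_le_cancel_left1 flip: ks_eq)
    ultimately show ?thesis
      unfolding qa by linarith
  qed
  ultimately show ?thesis
    unfolding t_def a_def b_def l_def by blast
qed

lemma powr_half_multiple:
  fixes x :: real
  assumes "0 < x"
  shows "x powr (real m / 2) = sqrt x ^ m"
proof -
  have "x powr (real m / 2) = (x powr (1 / 2)) powr real m"
    by (simp add: powr_powr)
  also have "\<dots> = sqrt x ^ m"
    using assms by (simp add: powr_half_sqrt powr_realpow)
  finally show ?thesis .
qed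

lemma square_powr_quarter_multiple:
  fixes x :: real
  assumes "0 < x"
  shows "(x\<^sup>2) powr (real m / 4) = sqrt x ^ m"
proof -
  have "(x\<^sup>2) powr (real m / 4) = (x powr 2) powr (real m / 4)"
    using assms by (simp add: powr_numeral)
  also have "\<dots> = x powr (2 * (real m / 4))"
    by (rule powr_powr)
  also have "\<dots> = sqrt x ^ m"
    using powr_half_multiple[OF assms, of m] by simp
  finally show ?thesis .
qed

theorem theorem4p11:
  shows "\<exists>q0::nat. \<forall>q::nat. primepow q \<and> q \<ge> q0 \<longrightarrow>
    (\<forall>n k s :: nat. n = q^2 \<longrightarrow> k > 0 \<longrightarrow> s > 0 \<longrightarrow>
       real (k * s) powr (3/2) < real n powr (1/4) / (32 * ln (real n)) \<longrightarrow>
       (\<exists>N. is_BAC n N k (2 * nat \<lceil>sqrt (real n) / real s\<rceil>) \<and>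
            real N \<le> real n + 64 * real (k * s) powr (3/2) * real n powr (3/4) * ln (real n)))"
proof (rule exI[of _ 21], intro allI impI)
  fix q n k s :: nat
  assume q: "primepow q \<and> 21 \<le> q" and n: "n = q^2" and "0 < k" "0 < s"
    and small: "real (k * s) powr (3/2) < real n powr (1/4) / (32 * ln (real n))"
  \<comment> \<open>The construction works for every q.\<close>
  have "0 < real q" "0 < real (k * s)"
    using q \<open>0 < k\<close> \<open>0 < s\<close> by simp_all
  then have powers: "sqrt (real n) = real q" "ln (real n) = 2 * ln (real q)"
      "real n powr (1/4) = sqrt (real q)" "real n powr (3/4) = sqrt (real q) ^ 3"
      "real (k * s) powr (3/2) = sqrt (real (k * s)) ^ 3"
    using square_powr_quarter_multiple[of "real q" 1] square_powr_quarter_multiple[of "real q" 3]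
      powr_half_multiple[of "real (k * s)" 3]
    by (simp_all add: n ln_realpow)
  have "0 < ln (real q)"
    using q by simp
  then have "64 * sqrt (real (k * s)) ^ 3 * ln (real q) < sqrt (real q)"
    using small unfolding powers by (simp add: less_divide_eq mult.commute mult.left_commute)
  then obtain N where "is_BAC (q\<^sup>2) N k (2 * nat \<lceil>real q / real s\<rceil>)"
    and "real N \<le> real q ^ 2 + 128 * sqrt (real (k * s)) ^ 3 * sqrt (real q) ^ 3 * ln (real q)"
    using exists_BAC_for_square[of q k s] q \<open>0 < k\<close> \<open>0 < s\<close> by blast
  then show "\<exists>N. is_BAC n N k (2 * nat \<lceil>sqrt (real n) / real s\<rceil>) \<and>
      real N \<le> real n + 64 * real (k * s) powr (3/2) * real n powr (3/4) * ln (real n)"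
    unfolding powers by (auto simp: n)
qed

end
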